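(* Assume $\lambda_1<\lambda_2$ and $\lambda_1<\lambda_3$, fix $a,b>0$ and $\Delta>0$ large enough that the contour $L$ and the function $\varphi$ below are defined, and let $E_1=\{y\in\mathbb Z^2: y_2>0,y_3>0\}$. Then: (1) for every $y\in E_1$, $\sum_{z\ne y}s_{yz}(\varphi(z)-\varphi(y))=\langle (u_2^{-1},u_3^{-1}),M_F\rangle$ with $M_F=(\lambda_2-\lambda_1,\lambda_3-\lambda_1)$, in particular it does not depend on $y$; (2) there exist constants $C,\gamma>0$ such that $\sum_{z\ne y}r_{yz}(\varphi(z)-\varphi(y))\le-\gamma\,\varphi(y)$ for all $y\in E_1$ with $\varphi(y)>C$.
   Context: Markov chain $Y(n)=(y_2,y_3)\in\mathbb Z^2$ (relative coordinates of the 3-processor cascade model, time normalized so that $\lambda_1+\lambda_2+\lambda_3+\beta_{12}+\beta_{23}=1$, all parameters positive), with transition probabilities $p_{yz}=s_{yz}+r_{yz}$ for $z\ne y$. Free part: $s_{y,y+(1,0)}=\lambda_2$, $s_{y,y+(0,1)}=\lambda_3$, $s_{y,y-(1,1)}=\lambda_1$, others $0$. Rollback part ($b_2=\lambda_2/(\lambda_2+\beta_{23})$): if $y_2>0,y_3\le0$: $r_{y,(0,y_3)}=\beta_{12}$; if $y_2<y_3$: $\beta_{23}$ is added to $r_{y,(y_2,y_2)}$; if $0<y_3\le y_2$: $\beta_{12}(1-b_2)^{z_3}b_2$ is added to $r_{y,(0,z_3)}$ for $0\le z_3<y_3$ and $\beta_{12}(1-b_2)^{y_3}$ to $r_{y,(0,y_3)}$;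 if $0<y_2<y_3$: $\beta_{12}(1-b_2)^{z_3}b_2$ is added to $r_{y,(0,z_3)}$ for $0\le z_3\le y_2$ and $\beta_{12}(1-b_2)^{y_2+1}$ to $r_{y,(0,y_3)}$. Contour $L$: with $e(y)=ay_2^2+b(y_2-y_3)^2$, let $T_3$, $T_2$ be the points of the ellipse $\{e=1\}$ where the outer normal has direction $(-\Delta,1)$, resp. $(1,-\Delta)$; $K_3=(0,u_3)$ is where the tangent at $T_3$ meets the $y_3$-axis and $K_2=(u_2,0)$ where the tangent at $T_2$ meets the $y_2$-axis ($u_2,u_3>0$). $L$ consists of segment $K_3K_2$, segment $K_2T_2$, the ellipse arc $T_2T_3$ through $(-a^{-1/2},-a^{-1/2})$, and segment $T_3K_3$; each open ray from $0$ meets $L$ once. $\varphi(0)=0$ and for $y\ne0$, $\varphi(y)>0$ is the unique number with $y/\varphi(y)\in L$ (so $\varphi(y)=y_2/u_2+y_3/u_3$ on the closed positive quadrant). *)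

theory Defs
  imports "HOL-Analysis.Analysis"
begin

(* Points of Z^2 are pairs (y2, y3) :: int \<times> int; fst = y_2, snd = y_3. *)

type_synonym pt = "int \<times> int"

definition rpt :: "pt \<Rightarrow> real \<times> real" where
  "rpt y = (real_of_int (fst y), real_of_int (snd y))"

definition s_free :: "real \<Rightarrow> real \<Rightarrow> real \<Rightarrow> pt \<Rightarrow> pt \<Rightarrow> real" where
  "s_free l1 l2 l3 y z =
     (if z = (fst y + 1, snd y) then l2 else 0)
   + (if z = (fst y, snd y + 1) then l3 else 0)
   + (if z = (fst y - 1, snd y - 1) then l1 else 0)"

definition r_roll :: "real \<Rightarrow> real \<Rightarrow> real \<Rightarrow> pt \<Rightarrow> pt \<Rightarrow> real" where
  "r_roll l2 b12 b23 y z =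
    (let y2 = fst y; y3 = snd y; z2 = fst z; z3 = snd z; b2 = l2 / (l2 + b23) in
       (if y2 > 0 \<and> y3 \<le> 0 \<and> z = (0, y3) then b12 else 0)
     + (if y2 < y3 \<and> z = (y2, y2) then b23 else 0)
     + (if 0 < y3 \<and> y3 \<le> y2 \<and> z2 = 0 \<and> 0 \<le> z3 \<and> z3 < y3
          then b12 * (1 - b2) ^ nat z3 * b2 else 0)
     + (if 0 < y3 \<and> y3 \<le> y2 \<and> z = (0, y3) then b12 * (1 - b2) ^ nat y3 else 0)
     + (if 0 < y2 \<and> y2 < y3 \<and> z2 = 0 \<and> 0 \<le> z3 \<and> z3 \<le> y2
          then b12 * (1 - b2) ^ nat z3 * b2 else 0)
     + (if 0 < y2 \<and> y2 < y3 \<and> z = (0, y3) then b12 * (1 - b2) ^ nat (y2 + 1) else 0))"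

definition ell :: "real \<Rightarrow> real \<Rightarrow> real \<times> real \<Rightarrow> real" where
  "ell a b p = a * (fst p)^2 + b * (fst p - snd p)^2"

definition ell_grad :: "real \<Rightarrow> real \<Rightarrow> real \<times> real \<Rightarrow> real \<times> real" where
  "ell_grad a b p = (2 * a * fst p + 2 * b * (fst p - snd p), - 2 * b * (fst p - snd p))"

definition normal_pt :: "real \<Rightarrow> real \<Rightarrow> real \<times> real \<Rightarrow> real \<times> real \<Rightarrow> bool" where
  "normal_pt a b v p \<longleftrightarrow> ell a b p = 1 \<and> (\<exists>c>0. ell_grad a b p = c *\<^sub>R v)"

definition T3 :: "real \<Rightarrow> real \<Rightarrow> real \<Rightarrow> real \<times> real" where
  "T3 a b D = (THE p. normal_pt a b (-D, 1) p)"

definition T2 :: "real \<Rightarrow> real \<Rightarrow> real \<Rightarrow> real \<times> real" where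
  "T2 a b D = (THE p. normal_pt a b (1, -D) p)"

definition tangent :: "real \<Rightarrow> real \<Rightarrow> real \<times> real \<Rightarrow> (real \<times> real) set" where
  "tangent a b p = {q. ell_grad a b p \<bullet> (q - p) = 0}"

definition K3 :: "real \<Rightarrow> real \<Rightarrow> real \<Rightarrow> real \<times> real" where
  "K3 a b D = (THE q. fst q = 0 \<and> q \<in> tangent a b (T3 a b D))"

definition K2 :: "real \<Rightarrow> real \<Rightarrow> real \<Rightarrow> real \<times> real" where
  "K2 a b D = (THE q. snd q = 0 \<and> q \<in> tangent a b (T2 a b D))"

definition u3 :: "real \<Rightarrow> real \<Rightarrow> real \<Rightarrow> real" where
  "u3 a b D = snd (K3 a b D)"

definition u2 :: "real \<Rightarrow> real \<Rightarrow> real \<Rightarrow> real" where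
  "u2 a b D = fst (K2 a b D)"

definition Pm :: "real \<Rightarrow> real \<times> real" where
  "Pm a = (- 1 / sqrt a, - 1 / sqrt a)"

definition ell_arc :: "real \<Rightarrow> real \<Rightarrow> real \<Rightarrow> (real \<times> real) set" where
  "ell_arc a b D =
     connected_component_set ({p. ell a b p = 1} - {T2 a b D, T3 a b D}) (Pm a)
     \<union> {T2 a b D, T3 a b D}"

definition contourL :: "real \<Rightarrow> real \<Rightarrow> real \<Rightarrow> (real \<times> real) set" where
  "contourL a b D =
     closed_segment (K3 a b D) (K2 a b D) \<union> closed_segment (K2 a b D) (T2 a b D)
     \<union> ell_arc a b D \<union> closed_segment (T3 a b D) (K3 a b D)"

definition phiL :: "real \<Rightarrow> real \<Rightarrow> real \<Rightarrow> real \<times> real \<Rightarrow> real" where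
  "phiL a b D y = (if y = 0 then 0 else (THE t. t > 0 \<and> (1 / t) *\<^sub>R y \<in> contourL a b D))"

(* "Delta is large enough that L and phi are defined" *)
definition contour_defined :: "real \<Rightarrow> real \<Rightarrow> real \<Rightarrow> bool" where
  "contour_defined a b D \<longleftrightarrow>
     (\<exists>!p. normal_pt a b (-D, 1) p) \<and> (\<exists>!p. normal_pt a b (1, -D) p)
   \<and> (\<exists>!q. fst q = 0 \<and> q \<in> tangent a b (T3 a b D))
   \<and> (\<exists>!q. snd q = 0 \<and> q \<in> tangent a b (T2 a b D))
   \<and> u2 a b D > 0 \<and> u3 a b D > 0
   \<and> T2 a b D \<noteq> T3 a b D \<and> Pm a \<notin> {T2 a b D, T3 a b D}
   \<and> (\<forall>y::real \<times> real. y \<noteq> 0 \<longrightarrow> (\<exists>!t. t > 0 \<and> (1 / t) *\<^sub>R y \<in> contourL a b D))"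

end

theory Submission
  imports Defs
begin

(* On the closed positive quadrant the contour L is the segment K3 K2, so phi is the linear form
   y2/u2 + y3/u3 there, and the free drift from a point of E1 is the constant <(1/u2, 1/u3), M_F>.
   From y in E1 a rollback either jumps to the y3-axis at height at most y3 (total mass beta12,
   each jump lowering phi by at least y2/u2) or, if y2 < y3, to the diagonal point (y2, y2)
   (mass beta23, lowering phi by (y3 - y2)/u3). As phi(y) <= (1 + u2/u3) y2/u2 + max 0 (y3 - y2)/u3,
   the rollback drift is at most -gamma phi(y) with gamma = min beta12 beta23 * u3/(u2 + u3), for
   every y in E1. *)

lemma u2_u3_pos:
  assumes "contour_defined a b D"
  shows "u2 a b D > 0" "u3 a b D > 0"
  using assms unfolding contour_defined_def by auto

lemma phiL_quadrant:
  assumes cd: "contour_defined a b D" and "0 \<le> x" "0 \<le> y"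
  shows "phiL a b D (x, y) = x / u2 a b D + y / u3 a b D"
proof -
  let ?u2 = "u2 a b D" and ?u3 = "u3 a b D"
  have u: "?u2 > 0" "?u3 > 0"
    and K3_unique: "\<exists>!q. fst q = 0 \<and> q \<in> tangent a b (T3 a b D)"
    and K2_unique: "\<exists>!q. snd q = 0 \<and> q \<in> tangent a b (T2 a b D)"
    and ray_unique: "\<forall>y::real \<times> real. y \<noteq> 0 \<longrightarrow> (\<exists>!t. t > 0 \<and> (1 / t) *\<^sub>R y \<in> contourL a b D)"
    using cd unfolding contour_defined_def by auto
  have K3: "K3 a b D = (0, ?u3)"
    using theI'[OF K3_unique] unfolding K3_def u3_def by (simp add: prod_eq_iff)
  have K2: "K2 a b D = (?u2, 0)"
    using theI'[OF K2_unique] unfolding K2_def u2_def by (simp add: prod_eq_iff)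
  show ?thesis
  proof (cases "(x, y) = 0")
    case True
    then show ?thesis by (simp add: phiL_def zero_prod_def)
  next
    case False
    define t where "t = x / ?u2 + y / ?u3"
    have "t > 0"
      using False assms(2,3) u unfolding t_def zero_prod_def
      by (smt (verit) divide_nonneg_pos divide_pos_pos prod.inject)
    define s where "s = (x / ?u2) / t"
    have "0 \<le> s" "s \<le> 1"
      using \<open>t > 0\<close> assms(2,3) u by (auto simp: s_def t_def divide_simps)
    moreover have "(1 / t) *\<^sub>R (x, y) = (1 - s) *\<^sub>R K3 a b D + s *\<^sub>R K2 a b D"
      unfolding K3 K2 using \<open>t > 0\<close> u by (simp add: s_def t_def field_simps)
    ultimately have "(1 / t) *\<^sub>R (x, y) \<in> closed_segment (K3 a b D) (K2 a b D)"
      unfolding closed_segment_def by blast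
    then have "(1 / t) *\<^sub>R (x, y) \<in> contourL a b D"
      unfolding contourL_def by blast
    then have "(THE t. t > 0 \<and> (1 / t) *\<^sub>R (x, y) \<in> contourL a b D) = t"
      using ray_unique False \<open>t > 0\<close> by (intro the1_equality) auto
    then show ?thesis
      using False by (simp add: phiL_def t_def)
  qed
qed

lemma phiL_rpt_quadrant:
  assumes "contour_defined a b D" "0 \<le> fst z" "0 \<le> snd z"
  shows "phiL a b D (rpt z) = fst z / u2 a b D + snd z / u3 a b D"
  using assms by (cases z) (simp add: rpt_def phiL_quadrant)

lemma free_drift_quadrant_eq:
  assumes cd: "contour_defined a b D" and "0 < p" "0 < q"
  shows "(\<Sum>\<^sub>\<infinity>z\<in>UNIV - {(p, q)}. s_free l1 l2 l3 (p, q) z * (phiL a b D (rpt z) - phiL a b D (rpt (p, q))))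
           = (1 / u2 a b D, 1 / u3 a b D) \<bullet> (l2 - l1, l3 - l1)"
    (is "infsum ?f _ = _")
proof -
  have "infsum ?f (UNIV - {(p, q)}) = sum ?f {(p + 1, q), (p, q + 1), (p - 1, q - 1)}"
    by (intro infsumI has_sum_finite_neutralI[where B = "{(p + 1, q), (p, q + 1), (p - 1, q - 1)}"])
      (auto simp: s_free_def)
  also have "\<dots> = (1 / u2 a b D, 1 / u3 a b D) \<bullet> (l2 - l1, l3 - l1)"
    using assms u2_u3_pos[OF cd]
    by (simp add: s_free_def phiL_rpt_quadrant inner_prod_def field_simps)
  finally show ?thesis .
qed

lemma has_sum_weighted_average_le:
  fixes w f :: "'a \<Rightarrow> real"
  assumes "(w has_sum 1) A" and "((\<lambda>x. w x * f x) has_sum s) A"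
    and "\<And>x. x \<in> A \<Longrightarrow> 0 \<le> w x" and "\<And>x. x \<in> A \<Longrightarrow> w x \<noteq> 0 \<Longrightarrow> f x \<le> c"
  shows "s \<le> c"
proof -
  have "((\<lambda>x. w x * c) has_sum c) A"
    using has_sum_cmult_left[OF assms(1), of c] by simp
  moreover have "w x * f x \<le> w x * c" if "x \<in> A" for x
    using assms(3,4)[OF that] by (cases "w x = 0") (auto intro: mult_left_mono)
  ultimately show ?thesis
    using assms(2) has_sum_mono by blast
qed

definition axis_points :: "nat \<Rightarrow> int \<Rightarrow> pt set" where
  "axis_points n t = insert (0, t) ((\<lambda>k. (0, int k)) ` {..<n})"

(* The beta12-rollback from y in E1 divided by beta12: the law of the point (0, k) reached on the
   y3-axis, geometric with ratio q = 1 - b2 and cut off at n = min y3 (y2 + 1), the remaining mass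
   q^n sitting at (0, y3). *)
definition trunc_geom :: "real \<Rightarrow> nat \<Rightarrow> int \<Rightarrow> pt \<Rightarrow> real" where
  "trunc_geom q n t z =
     (if fst z = 0 \<and> 0 \<le> snd z \<and> snd z < int n then q ^ nat (snd z) * (1 - q) else 0)
   + (if z = (0, t) then q ^ n else 0)"

lemma finite_axis_points [simp]: "finite (axis_points n t)"
  by (simp add: axis_points_def)

lemma axis_points_subset:
  assumes "int n \<le> t"
  shows "axis_points n t \<subseteq> {z. fst z = 0 \<and> 0 \<le> snd z \<and> snd z \<le> t}"
  using assms by (auto simp: axis_points_def)

lemma trunc_geom_nonneg:
  assumes "0 \<le> q" "q \<le> 1"
  shows "0 \<le> trunc_geom q n t z"
  using assms by (simp add: trunc_geom_def)

lemma trunc_geom_support: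
  assumes "z \<notin> axis_points n t"
  shows "trunc_geom q n t z = 0"
proof -
  have "\<not> (fst z = 0 \<and> 0 \<le> snd z \<and> snd z < int n)"
  proof
    assume "fst z = 0 \<and> 0 \<le> snd z \<and> snd z < int n"
    then have "z = (0, int (nat (snd z)))" "nat (snd z) < n"
      by (auto simp: prod_eq_iff)
    then show False
      using assms unfolding axis_points_def by blast
  qed
  moreover have "z \<noteq> (0, t)"
    using assms by (simp add: axis_points_def)
  ultimately show ?thesis
    by (auto simp: trunc_geom_def)
qed

lemma sum_trunc_geom:
  assumes "int n \<le> t"
  shows "sum (trunc_geom q n t) (axis_points n t) = 1"
proof -
  have inj: "inj_on (\<lambda>k. (0 :: int, int k)) {..<n}"
    by (auto simp: inj_on_def)
  have "(0, t) \<notin> (\<lambda>k. (0, int k)) ` {..<n}"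
    using assms by auto
  then have "sum (trunc_geom q n t) (axis_points n t)
      = trunc_geom q n t (0, t) + (\<Sum>k<n. trunc_geom q n t (0, int k))"
    unfolding axis_points_def by (subst sum.insert) (simp_all add: sum.reindex[OF inj])
  also have "\<dots> = q ^ n + (\<Sum>k<n. q ^ k * (1 - q))"
    using assms by (simp add: trunc_geom_def)
  also have "\<dots> = 1"
    by (induction n) (auto simp: algebra_simps)
  finally show ?thesis .
qed

lemma has_sum_trunc_geom:
  assumes "int n \<le> t" "axis_points n t \<subseteq> A"
  shows "(trunc_geom q n t has_sum 1) A"
  using assms
  by (intro has_sum_finite_neutralI[where B = "axis_points n t"])
    (auto simp: trunc_geom_support sum_trunc_geom)

lemma r_roll_quadrant:
  assumes "0 < p" "0 < q"
  shows "r_roll l2 b12 b23 (p, q) z =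
           b12 * trunc_geom (1 - l2 / (l2 + b23)) (nat (min q (p + 1))) q z
         + (if p < q \<and> z = (p, p) then b23 else 0)"
  using assms by (cases "q \<le> p") (auto simp: r_roll_def trunc_geom_def Let_def nat_add_distrib)

lemma rollback_drift_dominates_gauge:
  fixes p q u2 u3 b12 b23 :: real
  assumes "0 < u2" "0 < u3" "0 \<le> p" "0 \<le> b12" "0 \<le> b23"
  shows "min b12 b23 * u3 / (u2 + u3) * (p / u2 + q / u3)
           \<le> b12 * (p / u2) + b23 * (max 0 (q - p) / u3)"
proof -
  define m where "m = min b12 b23"
  define \<gamma> where "\<gamma> = m * (u3 / (u2 + u3))"
  have "0 \<le> m" "m \<le> b12" "m \<le> b23"
    using assms by (auto simp: m_def)
  moreover have "0 \<le> u3 / (u2 + u3)" "u3 / (u2 + u3) \<le> 1"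
    using assms(1,2) by auto
  ultimately have "0 \<le> \<gamma>" "\<gamma> \<le> m"
    unfolding \<gamma>_def by (simp_all add: mult_left_le del: times_divide_eq_right)
  have "\<gamma> * (p / u2 + p / u3) = m * (p / u2)"
    using assms(1,2) by (simp add: \<gamma>_def field_simps add_pos_pos[THEN less_imp_neq, symmetric])
  have "\<gamma> * (p / u2 + q / u3) \<le> \<gamma> * (p / u2 + p / u3 + max 0 (q - p) / u3)"
    using \<open>0 \<le> \<gamma>\<close> assms(2)
    by (intro mult_left_mono) (auto simp: add_divide_distrib[symmetric] divide_right_mono)
  also have "\<dots> = m * (p / u2) + \<gamma> * (max 0 (q - p) / u3)"
    using \<open>\<gamma> * (p / u2 + p / u3) = m * (p / u2)\<close> by (simp add: distrib_left)
  also have "\<dots> \<le> b12 * (p / u2) + b23 * (max 0 (q - p) / u3)"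
    using \<open>m \<le> b12\<close> \<open>\<gamma> \<le> m\<close> \<open>m \<le> b23\<close> assms(1-3)
    by (intro add_mono mult_right_mono) auto
  finally show ?thesis
    by (simp add: \<gamma>_def m_def)
qed

lemma rollback_drift_quadrant_le:
  assumes cd: "contour_defined a b D" and "0 < l2" "0 \<le> b12" "0 < b23" "0 < p" "0 < q"
  shows "(\<Sum>\<^sub>\<infinity>z\<in>UNIV - {(p, q)}. r_roll l2 b12 b23 (p, q) z * (phiL a b D (rpt z) - phiL a b D (rpt (p, q))))
           \<le> - (b12 * (p / u2 a b D) + b23 * (max 0 (q - p) / u3 a b D))"
proof -
  let ?u2 = "u2 a b D" and ?u3 = "u3 a b D"
  let ?\<Delta> = "\<lambda>z. phiL a b D (rpt z) - phiL a b D (rpt (p, q))"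
  let ?A = "UNIV - {(p, q)}"
  let ?jump = "max 0 (real_of_int q - real_of_int p) / ?u3"
  define g where "g = 1 - l2 / (l2 + b23)"
  define n where "n = nat (min q (p + 1))"
  have "0 \<le> g" "g \<le> 1"
    using assms(2,4) by (auto simp: g_def)
  have "int n \<le> q"
    using assms(5,6) by (simp add: n_def)
  then have axis: "axis_points n q \<subseteq> {z. fst z = 0 \<and> 0 \<le> snd z \<and> snd z \<le> q}"
    by (rule axis_points_subset)
  have "axis_points n q \<subseteq> ?A"
    using axis assms(5) by auto
  have axis_drop: "?\<Delta> z \<le> - (p / ?u2)" if "z \<in> axis_points n q" for z
  proof -
    have "fst z = 0" "0 \<le> snd z" "snd z \<le> q"
      using axis that by auto
    then show ?thesis
      using assms(5,6) u2_u3_pos[OF cd]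
      by (cases z) (simp add: phiL_rpt_quadrant[OF cd] divide_right_mono)
  qed
  define s where "s = (\<Sum>z\<in>axis_points n q. trunc_geom g n q z * ?\<Delta> z)"
  have geom: "((\<lambda>z. trunc_geom g n q z * ?\<Delta> z) has_sum s) ?A"
    unfolding s_def using \<open>axis_points n q \<subseteq> ?A\<close>
    by (intro has_sum_finite_neutralI) (auto simp: trunc_geom_support)
  have "s \<le> - (p / ?u2)"
  proof (rule has_sum_weighted_average_le[OF _ geom])
    show "(trunc_geom g n q has_sum 1) ?A"
      using \<open>int n \<le> q\<close> \<open>axis_points n q \<subseteq> ?A\<close> by (rule has_sum_trunc_geom)
    show "0 \<le> trunc_geom g n q z" for z
      using \<open>0 \<le> g\<close> \<open>g \<le> 1\<close> by (rule trunc_geom_nonneg)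
    show "?\<Delta> z \<le> - (p / ?u2)" if "trunc_geom g n q z \<noteq> 0" for z
      using that trunc_geom_support axis_drop by blast
  qed
  have diagonal_jump: "((\<lambda>z. (if p < q \<and> z = (p, p) then b23 else 0) * ?\<Delta> z)
                has_sum - (b23 * ?jump)) ?A"
  proof (cases "p < q")
    case True
    then show ?thesis
      using assms(5)
      by (intro has_sum_finite_neutralI[where B = "{(p, p)}"])
        (auto simp: phiL_rpt_quadrant[OF cd] diff_divide_distrib algebra_simps)
  next
    case False
    then show ?thesis
      by simp
  qed
  have "((\<lambda>z. r_roll l2 b12 b23 (p, q) z * ?\<Delta> z) has_sum (b12 * s - b23 * ?jump)) ?A"
    using has_sum_add[OF has_sum_cmult_right[OF geom, of b12] diagonal_jump] assms(5,6)
    by (simp add: r_roll_quadrant g_def n_def algebra_simps)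
  then have "infsum (\<lambda>z. r_roll l2 b12 b23 (p, q) z * ?\<Delta> z) ?A = b12 * s - b23 * ?jump"
    by (rule infsumI)
  also have "\<dots> \<le> - (b12 * (p / ?u2) + b23 * ?jump)"
    using mult_left_mono[OF \<open>s \<le> - (p / ?u2)\<close> assms(3)] by simp
  finally show ?thesis .
qed

theorem lemma5:
  fixes l1 l2 l3 b12 b23 a b D :: real
  assumes "l1 > 0" "l2 > 0" "l3 > 0" "b12 > 0" "b23 > 0"
    and "l1 + l2 + l3 + b12 + b23 = 1"
    and "l1 < l2" "l1 < l3"
    and "a > 0" "b > 0" "D > 0"
    and "contour_defined a b D"
  shows "(\<forall>y::int \<times> int. fst y > 0 \<and> snd y > 0 \<longrightarrow>
           (\<Sum>\<^sub>\<infinity>z\<in>UNIV - {y}. s_free l1 l2 l3 y z * (phiL a b D (rpt z) - phiL a b D (rpt y)))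
           = (1 / u2 a b D, 1 / u3 a b D) \<bullet> (l2 - l1, l3 - l1))
         \<and> (\<exists>C \<gamma>. C > 0 \<and> \<gamma> > 0 \<and>
           (\<forall>y::int \<times> int. fst y > 0 \<and> snd y > 0 \<and> phiL a b D (rpt y) > C \<longrightarrow>
             (\<Sum>\<^sub>\<infinity>z\<in>UNIV - {y}. r_roll l2 b12 b23 y z * (phiL a b D (rpt z) - phiL a b D (rpt y)))
             \<le> - \<gamma> * phiL a b D (rpt y)))"
proof -
  note cd = \<open>contour_defined a b D\<close>
  let ?u2 = "u2 a b D" and ?u3 = "u3 a b D"
  define \<gamma> where "\<gamma> = min b12 b23 * ?u3 / (?u2 + ?u3)"
  have "\<gamma> > 0"
    using u2_u3_pos[OF cd] assms(4,5) by (simp add: \<gamma>_def)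
  have "(\<Sum>\<^sub>\<infinity>z\<in>UNIV - {(p, q)}. r_roll l2 b12 b23 (p, q) z * (phiL a b D (rpt z) - phiL a b D (rpt (p, q))))
          \<le> - \<gamma> * phiL a b D (rpt (p, q))" if "0 < p" "0 < q" for p q :: int
  proof -
    have "\<gamma> * phiL a b D (rpt (p, q)) = \<gamma> * (p / ?u2 + q / ?u3)"
      using that by (simp add: phiL_rpt_quadrant[OF cd])
    also have "\<dots> \<le> b12 * (p / ?u2) + b23 * (max 0 (real_of_int q - real_of_int p) / ?u3)"
      unfolding \<gamma>_def using that u2_u3_pos[OF cd] assms(4,5)
      by (intro rollback_drift_dominates_gauge) auto
    finally have "\<gamma> * phiL a b D (rpt (p, q)) \<le> \<dots>" .
    then show ?thesis
      using rollback_drift_quadrant_le[OF cd assms(2) _ assms(5) that, of b12] assms(4) by simp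
  qed
  \<comment> \<open>The bound holds on all of E1, so any threshold C > 0 will do.\<close>
  then show ?thesis
    using free_drift_quadrant_eq[OF cd] \<open>\<gamma> > 0\<close>
    by (intro conjI exI[of _ 1] exI[of _ \<gamma>]) auto
qed

end
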